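(* Let $P$ be a distribution on $\mathcal{X}$, $R>0$, $K>0$. Then $E_e(P,R,K,0)=E_e(P,R,K)$, where \[ E_e(P,R,K,0)=\min\Big\{\min_{TV\widetilde{V}:\; B_{T\widetilde{V}}\le B_{TV}\le K} F(TV,T\widetilde{V}),\ \min_{TV\widetilde{V}:\; B_{TV}\ge K} F(TV,T\widetilde{V})\Big\}, \] \[ F(TV,T\widetilde{V})=D(TV\|PW)+\big|A_{T\widetilde{V}}-R+|B_{T\widetilde{V}}-K|^{+}\big|^{+}, \] and \[ E_e(P,R,K)=\min_{TV}\Big\{D(TV\|PW)+\big|A_{TV}-R+|B_{TV}-K|^{+}\big|^{+}\Big\}. \]
   Context: $\mathcal{X},\mathcal{Y}$ are finite alphabets and $W(y|x)$ is a conditional distribution on $\mathcal{Y}$ given $\mathcal{X}$. Logs are natural. $TV$, $T\widetilde{V}$ denote joint distributions on $\mathcal{Y}\times\mathcal{X}$ with common $\mathcal{Y}$-marginal $T$ and conditionals $V(x|y)$, $\widetilde{V}(x|y)$; minima are over all such distributions. $PW$ is the joint distribution $P(x)W(y|x)$; $D(TV\|PW)=\sum T(y)V(x|y)\log\frac{T(y)V(x|y)}{P(x)W(y|x)}$; $A_{TV}=\sum T(y)V(x|y)\log\frac{V(x|y)}{P(x)}$; $B_{TV}=\mathbb{E}_{TV}[-\log W(Y|X)]$; $|t|^{+}=\max\{0,t\}$. *)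

theory Defs
  imports "HOL-Analysis.Analysis"
begin

definition is_dist :: "('a::finite \<Rightarrow> real) \<Rightarrow> bool" where
  "is_dist p \<longleftrightarrow> (\<forall>a. 0 \<le> p a) \<and> sum p UNIV = 1"

text \<open>A channel W(y|x), written W x y.\<close>
definition is_channel :: "('x::finite \<Rightarrow> 'y::finite \<Rightarrow> real) \<Rightarrow> bool" where
  "is_channel W \<longleftrightarrow> (\<forall>x. is_dist (W x))"

text \<open>A joint distribution TV on Y x X is represented by its mass function
  Q y x = T(y) V(x|y); T is its Y-marginal.\<close>
definition is_joint :: "('y::finite \<Rightarrow> 'x::finite \<Rightarrow> real) \<Rightarrow> bool" where
  "is_joint Q \<longleftrightarrow> (\<forall>y x. 0 \<le> Q y x) \<and> (\<Sum>y\<in>UNIV. \<Sum>x\<in>UNIV. Q y x) = 1"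

definition ymarg :: "('y::finite \<Rightarrow> 'x::finite \<Rightarrow> real) \<Rightarrow> 'y \<Rightarrow> real" where
  "ymarg Q y = (\<Sum>x\<in>UNIV. Q y x)"

definition xlog_ratio :: "real \<Rightarrow> real \<Rightarrow> ereal" where
  "xlog_ratio q d = (if q = 0 then 0 else if d = 0 then \<infinity> else ereal (q * ln (q / d)))"

definition divg :: "('y::finite \<Rightarrow> 'x::finite \<Rightarrow> real) \<Rightarrow> ('x \<Rightarrow> real) \<Rightarrow> ('x \<Rightarrow> 'y \<Rightarrow> real) \<Rightarrow> ereal" where
  "divg Q P W = (\<Sum>y\<in>UNIV. \<Sum>x\<in>UNIV. xlog_ratio (Q y x) (P x * W x y))"

text \<open>A_{TV} = sum T(y) V(x|y) log (V(x|y)/P(x)) = sum Q log (Q / (T P))\<close>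
definition A_term :: "('y::finite \<Rightarrow> 'x::finite \<Rightarrow> real) \<Rightarrow> ('x \<Rightarrow> real) \<Rightarrow> ereal" where
  "A_term Q P = (\<Sum>y\<in>UNIV. \<Sum>x\<in>UNIV. xlog_ratio (Q y x) (ymarg Q y * P x))"

definition B_term :: "('y::finite \<Rightarrow> 'x::finite \<Rightarrow> real) \<Rightarrow> ('x \<Rightarrow> 'y \<Rightarrow> real) \<Rightarrow> ereal" where
  "B_term Q W = (\<Sum>y\<in>UNIV. \<Sum>x\<in>UNIV.
      (if Q y x = 0 then 0 else if W x y = 0 then \<infinity> else ereal (- Q y x * ln (W x y))))"

definition pospart :: "ereal \<Rightarrow> ereal" where
  "pospart t = max 0 t"

definition F_fun :: "('x::finite \<Rightarrow> real) \<Rightarrow> ('x \<Rightarrow> 'y::finite \<Rightarrow> real) \<Rightarrow> real \<Rightarrow> real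
    \<Rightarrow> ('y \<Rightarrow> 'x \<Rightarrow> real) \<Rightarrow> ('y \<Rightarrow> 'x \<Rightarrow> real) \<Rightarrow> ereal" where
  "F_fun P W R K Q Q' =
     divg Q P W + pospart (A_term Q' P - ereal R + pospart (B_term Q' W - ereal K))"

definition joint_pairs :: "(('y::finite \<Rightarrow> 'x::finite \<Rightarrow> real) \<times> ('y \<Rightarrow> 'x \<Rightarrow> real)) set" where
  "joint_pairs = {(Q, Q'). is_joint Q \<and> is_joint Q' \<and> ymarg Q = ymarg Q'}"

definition Ee0 :: "('x::finite \<Rightarrow> real) \<Rightarrow> ('x \<Rightarrow> 'y::finite \<Rightarrow> real) \<Rightarrow> real \<Rightarrow> real \<Rightarrow> ereal" where
  "Ee0 P W R K = min
     (INF QQ \<in> {(Q, Q') \<in> joint_pairs. B_term Q' W \<le> B_term Q W \<and> B_term Q W \<le> ereal K}.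
        F_fun P W R K (fst QQ) (snd QQ))
     (INF QQ \<in> {(Q, Q') \<in> joint_pairs. B_term Q W \<ge> ereal K}.
        F_fun P W R K (fst QQ) (snd QQ))"

definition Ee :: "('x::finite \<Rightarrow> real) \<Rightarrow> ('x \<Rightarrow> 'y::finite \<Rightarrow> real) \<Rightarrow> real \<Rightarrow> real \<Rightarrow> ereal" where
  "Ee P W R K = (INF Q \<in> {Q. is_joint Q}.
     divg Q P W + pospart (A_term Q P - ereal R + pospart (B_term Q W - ereal K)))"

end

theory Submission
  imports Defs
begin

(* Since TV and TV~ share the Y-marginal T, D(TV||PW) = A_TV + B_TV - H(T), and the entropy H(T)
   is the same for both members of a pair.  Taking V~ = V gives E_e(P,R,K,0) <= E_e(P,R,K).
   Conversely, on either constraint set F(TV,TV~) dominates the objective of E_e at V or at V~: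
   if A_TV + |B_TV - K|^+ <= A_TV~ + |B_TV~ - K|^+ it dominates at V by monotonicity of |.|^+;
   otherwise either constraint forces A_TV~ + B_TV~ <= A_TV + B_TV, and it dominates at V~. *)

lemma ereal_diff_real_le_cancel:
  fixes x y :: ereal
  shows "x - ereal c \<le> y - ereal c \<Longrightarrow> x \<le> y"
  by (cases x; cases y) auto

lemma pospart_mono: "s \<le> t \<Longrightarrow> pospart s \<le> pospart t"
  unfolding pospart_def by (rule max.mono) simp

lemma min_penalised_le_cross:
  fixes a b a' b' :: ereal and R K :: real
  assumes "b' \<le> b \<and> b \<le> ereal K \<or> ereal K \<le> b"
  shows "min (a + b + pospart (a - ereal R + pospart (b - ereal K)))
             (a' + b' + pospart (a' - ereal R + pospart (b' - ereal K)))
         \<le> a + b + pospart (a' - ereal R + pospart (b' - ereal K))"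
proof (cases "a + pospart (b - ereal K) \<le> a' + pospart (b' - ereal K)")
  case True
  then have "a - ereal R + pospart (b - ereal K) \<le> a' - ereal R + pospart (b' - ereal K)"
    by (metis ereal_diff_add_assoc2 ereal_minus_mono order_refl)
  then show ?thesis
    by (intro min.coboundedI1 add_left_mono pospart_mono)
next
  case False
  have "a' + b' \<le> a + b"
    using assms
  proof
    assume below_K: "b' \<le> b \<and> b \<le> ereal K"
    then have "pospart (b - ereal K) = 0" "pospart (b' - ereal K) = 0"
      by (cases b; cases b'; simp add: pospart_def)+
    with False have "a' \<le> a" by simp
    then show ?thesis using below_K by (intro add_mono) auto
  next
    assume "ereal K \<le> b"
    then have above_K: "pospart (b - ereal K) = b - ereal K"
      by (cases b) (simp_all add: pospart_def)
    have "a' + (b' - ereal K) \<le> a' + pospart (b' - ereal K)"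
      by (simp add: pospart_def add_left_mono)
    also have "\<dots> \<le> a + (b - ereal K)"
      using False above_K by simp
    finally have "a' + b' - ereal K \<le> a + b - ereal K"
      by (simp add: add_diff_eq_ereal)
    then show ?thesis
      by (rule ereal_diff_real_le_cancel)
  qed
  then show ?thesis
    by (intro min.coboundedI2 add_right_mono)
qed

lemma xlog_ratio_split:
  fixes q t p w :: real
  assumes "0 \<le> q" "q \<le> t" "0 \<le> p" "0 \<le> w"
  shows "xlog_ratio q (p * w) = xlog_ratio q (t * p)
     + (if q = 0 then 0 else if w = 0 then \<infinity> else ereal (- q * ln w)) + ereal (q * ln t)"
proof (cases "q = 0")
  case False
  then have "q > 0" "t > 0" using assms by auto
  show ?thesis
  proof (cases "p = 0 \<or> w = 0")
    case False
    with assms have "p > 0" "w > 0" by auto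
    with \<open>q > 0\<close> \<open>t > 0\<close>
    have "q * ln (q / (p * w)) = q * ln (q / (t * p)) + - q * ln w + q * ln t"
      by (simp add: ln_div ln_mult algebra_simps)
    with \<open>q > 0\<close> \<open>t > 0\<close> \<open>p > 0\<close> \<open>w > 0\<close> show ?thesis
      by (simp add: xlog_ratio_def)
  qed (use \<open>q > 0\<close> \<open>t > 0\<close> in \<open>auto simp: xlog_ratio_def\<close>)
qed (simp add: xlog_ratio_def)

lemma divg_eq_A_term_B_term:
  fixes Q :: "'y::finite \<Rightarrow> 'x::finite \<Rightarrow> real"
  assumes Q: "\<And>y x. 0 \<le> Q y x" and P: "\<And>x. 0 \<le> P x" and W: "\<And>x y. 0 \<le> W x y"
  shows "divg Q P W = A_term Q P + B_term Q W + ereal (\<Sum>y\<in>UNIV. ymarg Q y * ln (ymarg Q y))"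
proof -
  have le_ymarg: "Q y x \<le> ymarg Q y" for y x
    unfolding ymarg_def by (rule member_le_sum) (auto simp: Q)
  have "divg Q P W = (\<Sum>y\<in>UNIV. \<Sum>x\<in>UNIV. xlog_ratio (Q y x) (ymarg Q y * P x)
     + (if Q y x = 0 then 0 else if W x y = 0 then \<infinity> else ereal (- Q y x * ln (W x y)))
     + ereal (Q y x * ln (ymarg Q y)))"
    unfolding divg_def by (intro sum.cong refl xlog_ratio_split Q le_ymarg P W)
  also have "\<dots> = A_term Q P + B_term Q W
      + (\<Sum>y\<in>UNIV. \<Sum>x\<in>UNIV. ereal (Q y x * ln (ymarg Q y)))"
    unfolding A_term_def B_term_def by (simp add: sum.distrib)
  also have "(\<Sum>y\<in>UNIV. \<Sum>x\<in>UNIV. ereal (Q y x * ln (ymarg Q y)))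
      = ereal (\<Sum>y\<in>UNIV. ymarg Q y * ln (ymarg Q y))"
    by (simp add: ymarg_def sum_distrib_right)
  finally show ?thesis .
qed

definition Ee_objective :: "('x::finite \<Rightarrow> real) \<Rightarrow> ('x \<Rightarrow> 'y::finite \<Rightarrow> real) \<Rightarrow> real \<Rightarrow> real
    \<Rightarrow> ('y \<Rightarrow> 'x \<Rightarrow> real) \<Rightarrow> ereal" where
  "Ee_objective P W R K Q =
     divg Q P W + pospart (A_term Q P - ereal R + pospart (B_term Q W - ereal K))"

lemma Ee_eq_INF_objective: "Ee P W R K = (INF Q \<in> {Q. is_joint Q}. Ee_objective P W R K Q)"
  unfolding Ee_def Ee_objective_def ..

lemma F_fun_diagonal: "F_fun P W R K Q Q = Ee_objective P W R K Q"
  unfolding F_fun_def Ee_objective_def ..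

lemma min_objective_le_F_fun:
  assumes "\<And>x. 0 \<le> P x" "\<And>x y. 0 \<le> W x y" "(Q, Q') \<in> joint_pairs"
    and "B_term Q' W \<le> B_term Q W \<and> B_term Q W \<le> ereal K \<or> ereal K \<le> B_term Q W"
  shows "min (Ee_objective P W R K Q) (Ee_objective P W R K Q') \<le> F_fun P W R K Q Q'"
proof -
  define pen where "pen S = pospart (A_term S P - ereal R + pospart (B_term S W - ereal K))" for S
  define c where "c = (\<Sum>y\<in>UNIV. ymarg Q y * ln (ymarg Q y))"
  from assms(3) have "is_joint Q" "is_joint Q'" and "ymarg Q' = ymarg Q"
    by (auto simp: joint_pairs_def)
  with assms(1,2) have "divg Q P W = A_term Q P + B_term Q W + ereal c"
    "divg Q' P W = A_term Q' P + B_term Q' W + ereal c"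
    by (auto simp: divg_eq_A_term_B_term is_joint_def c_def)
  then have "Ee_objective P W R K Q = A_term Q P + B_term Q W + pen Q + ereal c"
    "Ee_objective P W R K Q' = A_term Q' P + B_term Q' W + pen Q' + ereal c"
    "F_fun P W R K Q Q' = A_term Q P + B_term Q W + pen Q' + ereal c"
    by (simp_all add: Ee_objective_def F_fun_def pen_def ac_simps)
  moreover have "min (A_term Q P + B_term Q W + pen Q) (A_term Q' P + B_term Q' W + pen Q')
      \<le> A_term Q P + B_term Q W + pen Q'"
    unfolding pen_def by (rule min_penalised_le_cross[OF assms(4)])
  ultimately show ?thesis
    by (auto simp: min_le_iff_disj intro: add_right_mono)
qed

lemma Ee0_le_objective:
  assumes "is_joint Q"
  shows "Ee0 P W R K \<le> Ee_objective P W R K Q"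
proof -
  have diag: "(Q, Q) \<in> joint_pairs"
    using assms by (simp add: joint_pairs_def)
  show ?thesis
  proof (cases "B_term Q W \<le> ereal K")
    case True
    with diag show ?thesis
      unfolding Ee0_def F_fun_diagonal[symmetric]
      by (intro min.coboundedI1 INF_lower2[where i = "(Q, Q)"]) auto
  next
    case False
    with diag show ?thesis
      unfolding Ee0_def F_fun_diagonal[symmetric]
      by (intro min.coboundedI2 INF_lower2[where i = "(Q, Q)"]) auto
  qed
qed

lemma Ee_le_F_fun:
  assumes "\<And>x. 0 \<le> P x" "\<And>x y. 0 \<le> W x y" "(Q, Q') \<in> joint_pairs"
    and "B_term Q' W \<le> B_term Q W \<and> B_term Q W \<le> ereal K \<or> ereal K \<le> B_term Q W"
  shows "Ee P W R K \<le> F_fun P W R K Q Q'"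
proof -
  from assms(3) have "is_joint Q" "is_joint Q'"
    by (auto simp: joint_pairs_def)
  then have "Ee P W R K \<le> min (Ee_objective P W R K Q) (Ee_objective P W R K Q')"
    unfolding Ee_eq_INF_objective by (auto intro: INF_lower)
  also have "\<dots> \<le> F_fun P W R K Q Q'"
    by (rule min_objective_le_F_fun[OF assms])
  finally show ?thesis .
qed

theorem lemma4:
  fixes P :: "'x::finite \<Rightarrow> real" and W :: "'x \<Rightarrow> 'y::finite \<Rightarrow> real"
    and R K :: real
  assumes "is_dist P" and "is_channel W" and "R > 0" and "K > 0"
  shows "Ee0 P W R K = Ee P W R K"
proof (rule antisym)
  have P_nonneg: "\<And>x. 0 \<le> P x" and W_nonneg: "\<And>x y. 0 \<le> W x y"
    using assms(1,2) by (auto simp: is_dist_def is_channel_def)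
  show "Ee0 P W R K \<le> Ee P W R K"
    unfolding Ee_eq_INF_objective by (rule INF_greatest) (simp add: Ee0_le_objective)
  show "Ee P W R K \<le> Ee0 P W R K"
    unfolding Ee0_def
    by (intro min.boundedI INF_greatest) (auto intro: Ee_le_F_fun P_nonneg W_nonneg)
qed

end
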